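(* Let $n\ge2$, $A\in\mathbb{R}^{n\times n}$ symmetric with largest and smallest eigenvalues $\lambda_1,\lambda_n$, $\rho=\lambda_1-\lambda_n$, $\beta>0$, and $f(\mathbf{z})=\frac12\mathbf{z}^TA\mathbf{z}+\frac{\beta}{2}\sum_kz_k^4$. If $\beta>\rho n^2$, then $f$ has at least $2^n$ local minimizers on $\mathbb{S}^{n-1}$. If $\beta>\frac{18n^3}{n-1}\rho$, then $f$ has exactly $2^n$ local minimizers on $\mathbb{S}^{n-1}$.
   Context: $\mathbb{S}^{n-1}$ is the unit sphere in $\mathbb{R}^n$. *)

theory Defs
  imports "HOL-Analysis.Analysis"
begin

definition mat_eigenvalue :: "real^'n^'n \<Rightarrow> real \<Rightarrow> bool" where
  "mat_eigenvalue A l \<longleftrightarrow> (\<exists>v. v \<noteq> 0 \<and> A *v v = l *\<^sub>R v)"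

definition lambda_max :: "real^'n^'n \<Rightarrow> real" where
  "lambda_max A = Max {l. mat_eigenvalue A l}"

definition lambda_min :: "real^'n^'n \<Rightarrow> real" where
  "lambda_min A = Min {l. mat_eigenvalue A l}"

definition quartic_obj :: "real^'n^'n \<Rightarrow> real \<Rightarrow> real^'n \<Rightarrow> real" where
  "quartic_obj A \<beta> z = 1/2 * (z \<bullet> (A *v z)) + \<beta>/2 * (\<Sum>k\<in>UNIV. (z $ k) ^ 4)"

definition local_minimizers_on :: "('a::metric_space \<Rightarrow> real) \<Rightarrow> 'a set \<Rightarrow> 'a set" where
  "local_minimizers_on g S =
     {z \<in> S. \<exists>\<epsilon>>0. \<forall>w\<in>S. dist w z < \<epsilon> \<longrightarrow> g z \<le> g w}"

end

theory Submission
  imports Defs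
begin

(* Shifting A by the midpoint of its spectrum changes f on the sphere only by a constant and
  leaves a symmetric C with |x . C x| <= rho/2 for unit x; the quartic term then dominates.
  Existence: on each closed orthant of the sphere f attains its minimum, and comparing with the
  balanced point (+-1, ..., +-1)/sqrt n shows that this minimiser has no zero coordinate, so it
  lies in the relative interior and is a local minimiser; the 2^n orthants give distinct ones.
  Uniqueness: the first- and second-order conditions force every coordinate of a local
  minimiser to have square about 1/n, and on such points the map z |-> z^3 is strongly
  monotone, so two local minimisers with the same sign pattern coincide. *)

lemma poly4_nonneg_near_0:
  fixes c1 c2 c3 c4 :: real
  assumes "eventually (\<lambda>t. 0 \<le> c1*t + c2*t^2 + c3*t^3 + c4*t^4) (at 0)"
  shows "c1 = 0" and "0 \<le> c2"
proof -
  have factor1: "c1*t + c2*t^2 + c3*t^3 + c4*t^4 = t * (c1 + c2*t + c3*t^2 + c4*t^3)" for t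
    by (simp add: algebra_simps power2_eq_square power3_eq_cube power4_eq_xxxx)
  have lim1: "((\<lambda>t. c1 + c2*t + c3*t^2 + c4*t^3) \<longlongrightarrow> c1) (at 0 within X)" for X
    by (rule tendsto_eq_intros refl | simp)+
  have "eventually (\<lambda>t. 0 \<le> c1*t + c2*t^2 + c3*t^3 + c4*t^4) (at_right 0)"
    using assms by (rule filter_leD[OF at_le, rotated]) simp
  then have "eventually (\<lambda>t. 0 \<le> c1 + c2*t + c3*t^2 + c4*t^3) (at_right 0)"
    using eventually_at_right_less[of 0]
    by eventually_elim (simp add: factor1 zero_le_mult_iff)
  then have "0 \<le> c1" by (rule tendsto_lowerbound[OF lim1]) simp
  moreover have "eventually (\<lambda>t. 0 \<le> c1*t + c2*t^2 + c3*t^3 + c4*t^4) (at_left 0)"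
    using assms by (rule filter_leD[OF at_le, rotated]) simp
  then have "eventually (\<lambda>t. c1 + c2*t + c3*t^2 + c4*t^3 \<le> 0) (at_left 0)"
    using eventually_at_left_real[where a=0 and b="-1", simplified]
    by eventually_elim (simp add: factor1 zero_le_mult_iff)
  then have "c1 \<le> 0" by (rule tendsto_upperbound[OF lim1]) simp
  ultimately show c1: "c1 = 0" by simp
  have factor2: "c2*t^2 + c3*t^3 + c4*t^4 = t^2 * (c2 + c3*t + c4*t^2)" for t
    by (simp add: algebra_simps power2_eq_square power3_eq_cube power4_eq_xxxx)
  have "eventually (\<lambda>t. 0 \<le> c2 + c3*t + c4*t^2) (at 0)"
    using assms eventually_neq_at_within[of 0 0 UNIV]
    by eventually_elim (simp add: c1 factor2 zero_le_mult_iff)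
  moreover have "((\<lambda>t. c2 + c3*t + c4*t^2) \<longlongrightarrow> c2) (at 0)"
    by (rule tendsto_eq_intros refl | simp)+
  ultimately show "0 \<le> c2" by (simp add: tendsto_lowerbound)
qed

section \<open>Symmetric matrices and the Rayleigh quotient\<close>

lemma inner_symmetric_matrix:
  fixes A :: "real^'n^'n"
  assumes "transpose A = A"
  shows "x \<bullet> (A *v y) = y \<bullet> (A *v x)"
  by (metis assms dot_lmul_matrix inner_commute vector_transpose_matrix)

lemma quadratic_form_add_scaled:
  fixes A :: "real^'n^'n"
  assumes "transpose A = A"
  shows "(z + t *\<^sub>R y) \<bullet> (A *v (z + t *\<^sub>R y))
           = z \<bullet> (A *v z) + 2*t*(y \<bullet> (A *v z)) + t^2 * (y \<bullet> (A *v y))"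
  using inner_symmetric_matrix[OF assms, of z y]
  by (simp add: matrix_vector_right_distrib matrix_vector_mult_scaleR inner_add_left inner_add_right
      algebra_simps power2_eq_square)

lemma quadratic_form_scaled:
  fixes A :: "real^'n^'n"
  shows "(c *\<^sub>R x) \<bullet> (A *v (c *\<^sub>R x)) = c^2 * (x \<bullet> (A *v x))"
  by (simp add: matrix_vector_mult_scaleR power2_eq_square)

lemma quadratic_form_le_of_unit:
  fixes A :: "real^'n^'n"
  assumes unit: "\<And>x. norm x = 1 \<Longrightarrow> x \<bullet> (A *v x) \<le> l"
  shows "x \<bullet> (A *v x) \<le> l * (x \<bullet> x)"
proof (cases "x = 0")
  case False
  have "inverse (norm x)^2 * (x \<bullet> (A *v x)) \<le> l"
    using unit[of "inverse (norm x) *\<^sub>R x"] False by (simp only: quadratic_form_scaled) simp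
  then show ?thesis
    using False by (simp add: power_inverse field_simps flip: power2_norm_eq_inner)
qed simp

text \<open>For y = l z - A z, the perturbation z + t y of the maximiser gives a quadratic in t
  whose linear coefficient 2 (y \<bullet> y) must vanish.\<close>
lemma rayleigh_max_eigenvector:
  fixes A :: "real^'n^'n"
  assumes sym: "transpose A = A"
  obtains z where "norm z = 1" and "\<And>x. norm x = 1 \<Longrightarrow> x \<bullet> (A *v x) \<le> z \<bullet> (A *v z)"
    and "A *v z = (z \<bullet> (A *v z)) *\<^sub>R z"
proof -
  have "sphere (0::real^'n) 1 \<noteq> {}"
    using norm_axis_1 by (metis mem_sphere_0 empty_iff)
  moreover have "continuous_on (sphere 0 1) (\<lambda>x. x \<bullet> (A *v x))"
    by (intro continuous_intros)
  ultimately obtain z where z: "z \<in> sphere 0 1"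
    and max: "\<And>x. x \<in> sphere 0 1 \<Longrightarrow> x \<bullet> (A *v x) \<le> z \<bullet> (A *v z)"
    using continuous_attains_sup[OF compact_sphere] by blast
  define l where "l = z \<bullet> (A *v z)"
  define y where "y = l *\<^sub>R z - A *v z"
  have zz: "z \<bullet> z = 1"
    using z by (simp add: dot_square_norm)
  have "0 \<le> 2 * (y \<bullet> y) * t + (l * (y \<bullet> y) - y \<bullet> (A *v y)) * t^2" for t
  proof -
    have "(z + t *\<^sub>R y) \<bullet> (A *v (z + t *\<^sub>R y)) \<le> l * ((z + t *\<^sub>R y) \<bullet> (z + t *\<^sub>R y))"
      using max by (intro quadratic_form_le_of_unit) (simp add: l_def)
    then have le: "l + 2*t*(y \<bullet> (A *v z)) + t^2 * (y \<bullet> (A *v y)) \<le> l * (1 + 2*t*(z \<bullet> y) + t^2*(y \<bullet> y))"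
      unfolding quadratic_form_add_scaled[OF sym] using zz
      by (simp add: inner_add_left inner_add_right inner_commute algebra_simps power2_eq_square l_def)
    have "y \<bullet> y = l * (z \<bullet> y) - y \<bullet> (A *v z)"
      by (simp add: y_def inner_diff_left inner_commute)
    from arg_cong[OF this, of "\<lambda>u. 2*t*u"]
    have "2 * (y \<bullet> y) * t + (l * (y \<bullet> y) - y \<bullet> (A *v y)) * t^2
        = l * (1 + 2*t*(z \<bullet> y) + t^2*(y \<bullet> y)) - (l + 2*t*(y \<bullet> (A *v z)) + t^2 * (y \<bullet> (A *v y)))"
      by (simp add: algebra_simps)
    with le show ?thesis by simp
  qed
  then have "eventually (\<lambda>t. 0 \<le> 2 * (y \<bullet> y) * t + (l * (y \<bullet> y) - y \<bullet> (A *v y)) * t^2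
      + 0 * t^3 + 0 * t^4) (at 0)"
    by (simp add: always_eventually)
  then have "2 * (y \<bullet> y) = 0"
    by (rule poly4_nonneg_near_0(1))
  then have "A *v z = l *\<^sub>R z"
    by (simp add: y_def)
  then show ?thesis
    using that z max by (simp add: l_def)
qed

lemma matrix_vector_mult_uminus: "(- A) *v x = - (A *v x)"
  for A :: "real^'n^'n"
  by (simp add: vec_eq_iff matrix_vector_mult_def sum_negf)

lemma finite_eigenvalues_symmetric:
  fixes A :: "real^'n^'n"
  assumes sym: "transpose A = A"
  shows "finite {l. mat_eigenvalue A l}"
proof -
  define E where "E = {l. mat_eigenvalue A l}"
  define v where "v l = (SOME v. v \<noteq> 0 \<and> A *v v = l *\<^sub>R v)" for l
  have v: "v l \<noteq> 0 \<and> A *v v l = l *\<^sub>R v l" if "l \<in> E" for l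
  proof -
    have "\<exists>v. v \<noteq> 0 \<and> A *v v = l *\<^sub>R v"
      using that by (simp add: E_def mat_eigenvalue_def)
    then show ?thesis
      unfolding v_def by (rule someI_ex)
  qed
  have "inj_on v E"
  proof (rule inj_onI)
    fix a b assume "a \<in> E" "b \<in> E" "v a = v b"
    then have "a *\<^sub>R v a = b *\<^sub>R v a" using v by metis
    then show "a = b" using v \<open>a \<in> E\<close> by (simp add: scaleR_cancel_right)
  qed
  moreover have "pairwise orthogonal (v ` E)"
  proof (clarsimp simp: pairwise_def)
    fix a b assume ab: "a \<in> E" "b \<in> E" "v a \<noteq> v b"
    have "a * (v b \<bullet> v a) = b * (v a \<bullet> v b)"
      using inner_symmetric_matrix[OF sym, of "v b" "v a"] v[OF ab(1)] v[OF ab(2)] by simp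
    with ab show "orthogonal (v a) (v b)"
      by (auto simp: orthogonal_def inner_commute)
  qed
  moreover have "0 \<notin> v ` E" using v by force
  ultimately show ?thesis
    unfolding E_def[symmetric]
    by (metis finite_imageD finiteI_independent pairwise_orthogonal_independent)
qed

lemma quadratic_form_le_lambda_max:
  fixes A :: "real^'n^'n"
  assumes sym: "transpose A = A" and x: "norm x = 1"
  shows "x \<bullet> (A *v x) \<le> lambda_max A"
proof -
  obtain z where "norm z = 1" and max: "\<And>x. norm x = 1 \<Longrightarrow> x \<bullet> (A *v x) \<le> z \<bullet> (A *v z)"
    and "A *v z = (z \<bullet> (A *v z)) *\<^sub>R z"
    using rayleigh_max_eigenvector[OF sym] by blast
  then have "mat_eigenvalue A (z \<bullet> (A *v z))"
    unfolding mat_eigenvalue_def by (intro exI[of _ z]) auto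
  then have "z \<bullet> (A *v z) \<le> lambda_max A"
    unfolding lambda_max_def using finite_eigenvalues_symmetric[OF sym] by simp
  with max[OF x] show ?thesis by simp
qed

lemma quadratic_form_ge_lambda_min:
  fixes A :: "real^'n^'n"
  assumes sym: "transpose A = A" and x: "norm x = 1"
  shows "lambda_min A \<le> x \<bullet> (A *v x)"
proof -
  have "transpose (- A) = - A"
    using sym by (simp add: vec_eq_iff transpose_def)
  then obtain w where "norm w = 1" and max: "\<And>x. norm x = 1 \<Longrightarrow> x \<bullet> ((- A) *v x) \<le> w \<bullet> ((- A) *v w)"
    and eigen: "(- A) *v w = (w \<bullet> ((- A) *v w)) *\<^sub>R w"
    using rayleigh_max_eigenvector by blast
  moreover have "A *v w = (w \<bullet> (A *v w)) *\<^sub>R w"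
    using eigen by (simp add: matrix_vector_mult_uminus vec_eq_iff)
  ultimately have "mat_eigenvalue A (w \<bullet> (A *v w))"
    unfolding mat_eigenvalue_def by (intro exI[of _ w]) auto
  then have "lambda_min A \<le> w \<bullet> (A *v w)"
    unfolding lambda_min_def using finite_eigenvalues_symmetric[OF sym] by simp
  with max[OF x] show ?thesis by (simp add: matrix_vector_mult_uminus)
qed

lemma bilinear_bound_of_quadratic_bound:
  fixes C :: "real^'n^'n"
  assumes sym: "transpose C = C" and unit: "\<And>x. norm x = 1 \<Longrightarrow> \<bar>x \<bullet> (C *v x)\<bar> \<le> r"
  shows "\<bar>x \<bullet> (C *v y)\<bar> \<le> r * norm x * norm y"
proof -
  have quad: "\<bar>x \<bullet> (C *v x)\<bar> \<le> r * (x \<bullet> x)" for x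
    using quadratic_form_le_of_unit[of C r x] quadratic_form_le_of_unit[of "- C" r x] unit
    by (force simp: matrix_vector_mult_uminus abs_le_iff)
  have unit2: "\<bar>x \<bullet> (C *v y)\<bar> \<le> r" if "norm x = 1" "norm y = 1" for x y
  proof -
    have "4 * (x \<bullet> (C *v y)) = (x + y) \<bullet> (C *v (x + y)) - (x - y) \<bullet> (C *v (x - y))"
      using quadratic_form_add_scaled[OF sym, of x 1 y] quadratic_form_add_scaled[OF sym, of x "-1" y]
        inner_symmetric_matrix[OF sym, of x y] by simp
    then have "\<bar>4 * (x \<bullet> (C *v y))\<bar> \<le> r * ((x + y) \<bullet> (x + y)) + r * ((x - y) \<bullet> (x - y))"
      using quad[of "x + y"] quad[of "x - y"] by linarith
    also have "\<dots> = 2 * r * (x \<bullet> x + y \<bullet> y)"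
      by (simp add: inner_add_left inner_add_right inner_diff_left inner_diff_right algebra_simps)
    finally show ?thesis
      using that by (simp add: dot_square_norm)
  qed
  show ?thesis
  proof (cases "x = 0 \<or> y = 0")
    case False
    then have "\<bar>(x /\<^sub>R norm x) \<bullet> (C *v (y /\<^sub>R norm y))\<bar> \<le> r"
      by (intro unit2) auto
    with False show ?thesis
      by (simp add: matrix_vector_mult_scaleR abs_mult field_simps)
  qed auto
qed

lemma mat_matrix_vector_mult: "mat c *v x = c *\<^sub>R x"
  for x :: "real^'n"
  by (simp add: vec_eq_iff matrix_vector_mult_def mat_def if_distrib[of "\<lambda>a. a * y" for y] cong: if_cong)

section \<open>Coordinate estimates on the unit sphere\<close>

lemma sum_coord_sq_eq_norm_sq: "(\<Sum>k\<in>UNIV. (z$k)^2) = (norm z)^2"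
  for z :: "real^'n"
  unfolding power2_norm_eq_inner by (simp add: inner_vec_def power2_eq_square)

lemma coord_sq_le_1: "norm z = 1 \<Longrightarrow> (z$k)^2 \<le> 1"
  for z :: "real^'n"
  using power_mono[OF component_le_norm_cart[of z k] abs_ge_zero, of 2] by simp

lemma sum_coord_pow4_le_1:
  fixes z :: "real^'n"
  assumes "norm z = 1"
  shows "(\<Sum>k\<in>UNIV. (z$k)^4) \<le> 1"
proof -
  have "(\<Sum>k\<in>UNIV. (z$k)^4) \<le> (\<Sum>k\<in>UNIV. (z$k)^2)"
  proof (rule sum_mono)
    fix k
    have "(z$k)^2 * (z$k)^2 \<le> 1 * (z$k)^2"
      using coord_sq_le_1[OF assms] by (intro mult_right_mono) auto
    then show "(z$k)^4 \<le> (z$k)^2" by (simp add: power4_eq_xxxx power2_eq_square)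
  qed
  then show ?thesis
    using assms by (simp add: sum_coord_sq_eq_norm_sq)
qed

lemma sum_coord_pow4_ge_support:
  fixes z :: "real^'n"
  assumes "norm z = 1" and "\<And>k. k \<notin> S \<Longrightarrow> z$k = 0"
  shows "1 \<le> real (card S) * (\<Sum>k\<in>UNIV. (z$k)^4)"
proof -
  have "(\<Sum>k\<in>S. (z$k)^2) = (\<Sum>k\<in>UNIV. (z$k)^2)"
    using assms(2) by (intro sum.mono_neutral_left) auto
  moreover have "(\<Sum>k\<in>S. (z$k)^4) = (\<Sum>k\<in>UNIV. (z$k)^4)"
    using assms(2) by (intro sum.mono_neutral_left) auto
  moreover have "(\<Sum>k\<in>S. 1 * (z$k)^2)^2 \<le> (\<Sum>k\<in>S. 1^2) * (\<Sum>k\<in>S. ((z$k)^2)^2)"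
    by (rule Cauchy_Schwarz_ineq_sum)
  ultimately show ?thesis
    using assms(1) by (simp add: sum_coord_sq_eq_norm_sq flip: power_mult)
qed

lemma tangent_projection_of_axis:
  fixes z :: "real^'n" and k :: 'n
  assumes "z \<bullet> z = 1"
  defines "v \<equiv> axis k 1 - (z$k) *\<^sub>R z"
  shows "z \<bullet> v = 0" and "v \<bullet> v = 1 - (z$k)^2"
    and "(\<Sum>j\<in>UNIV. (z$j)^2 * (v$j)^2) = (z$k)^2 - 2 * ((z$k)^2)^2 + (z$k)^2 * (\<Sum>j\<in>UNIV. (z$j)^4)"
proof -
  show "z \<bullet> v = 0"
    using assms(1) by (simp add: v_def inner_diff_right inner_axis inner_commute)
  show "v \<bullet> v = 1 - (z$k)^2"
    using assms(1) by (simp add: v_def inner_diff_left inner_diff_right inner_axis inner_axis_axis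
        inner_commute power2_eq_square algebra_simps)
  have "(z$j)^2 * (v$j)^2 = (if j = k then (z$k)^2 - 2*(z$k)^4 else 0) + (z$k)^2 * (z$j)^4" for j
    by (auto simp: v_def axis_def power2_eq_square power4_eq_xxxx algebra_simps)
  then show "(\<Sum>j\<in>UNIV. (z$j)^2 * (v$j)^2) = (z$k)^2 - 2 * ((z$k)^2)^2 + (z$k)^2 * (\<Sum>j\<in>UNIV. (z$j)^4)"
    by (simp add: sum.distrib sum_distrib_left flip: power_mult)
qed

lemma diff_mult_diff_cubes_ge:
  fixes a b L :: real
  assumes "L \<le> a^2" "L \<le> b^2" "L \<le> a * b"
  shows "3 * L * (a - b)^2 \<le> (a - b) * (a^3 - b^3)"
proof -
  have "(a - b) * (a^3 - b^3) = (a - b)^2 * (a^2 + a*b + b^2)"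
    by (simp add: algebra_simps power2_eq_square power3_eq_cube)
  moreover have "(a - b)^2 * (3 * L) \<le> (a - b)^2 * (a^2 + a*b + b^2)"
    using assms by (intro mult_left_mono) auto
  ultimately show ?thesis
    by (simp add: mult.commute)
qed

section \<open>The quartic objective on the sphere\<close>

lemma quartic_obj_normalized:
  assumes "0 < D"
  shows "D^2 * quartic_obj A \<beta> ((1 / sqrt D) *\<^sub>R x)
           = D/2 * (x \<bullet> (A *v x)) + \<beta>/2 * (\<Sum>k\<in>UNIV. (x$k)^4)"
proof -
  have "(1 / sqrt D)^2 = 1 / D"
    using assms by (simp add: power_divide)
  moreover have "(1 / sqrt D)^4 = ((1 / sqrt D)^2)^2"
    by (simp flip: power_mult)
  ultimately have "(1 / sqrt D)^2 = 1 / D" and "(1 / sqrt D)^4 = 1 / D^2"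
    by (simp_all add: power_divide)
  moreover have "quartic_obj A \<beta> (s *\<^sub>R x)
      = s^2/2 * (x \<bullet> (A *v x)) + \<beta>/2 * s^4 * (\<Sum>k\<in>UNIV. (x$k)^4)" for s
    by (simp add: quartic_obj_def matrix_vector_mult_scaleR power_mult_distrib sum_distrib_left
        power2_eq_square algebra_simps)
  ultimately have "quartic_obj A \<beta> ((1 / sqrt D) *\<^sub>R x)
      = 1 / D / 2 * (x \<bullet> (A *v x)) + \<beta>/2 * (1 / D^2) * (\<Sum>k\<in>UNIV. (x$k)^4)"
    by simp
  then show ?thesis
    using assms by (simp add: field_simps power2_eq_square)
qed

lemma sum_pow4_add_scaled:
  fixes z v :: "real^'n"
  shows "(\<Sum>k\<in>UNIV. ((z + t *\<^sub>R v)$k)^4) = (\<Sum>k\<in>UNIV. (z$k)^4) + 4*t*(\<Sum>k\<in>UNIV. (z$k)^3*(v$k))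
     + 6*t^2*(\<Sum>k\<in>UNIV. (z$k)^2*(v$k)^2) + 4*t^3*(\<Sum>k\<in>UNIV. (z$k)*(v$k)^3) + t^4*(\<Sum>k\<in>UNIV. (v$k)^4)"
proof -
  have "(a + t*b)^4 = a^4 + 4*t*(a^3*b) + 6*t^2*(a^2*b^2) + 4*t^3*(a*b^3) + t^4*b^4" for a b :: real
    by (simp add: algebra_simps power2_eq_square power3_eq_cube power4_eq_xxxx)
  then show ?thesis
    by (simp add: sum.distrib sum_distrib_left)
qed

text \<open>For unit z and v orthogonal to z the curve is the great circle through z in direction v;
  only the coefficients of t and t^2 are needed, as they decide local optimality at t = 0.\<close>
lemma quartic_obj_great_circle_expansion:
  fixes C :: "real^'n^'n"
  assumes sym: "transpose C = C"
  obtains c3 c4 where "\<And>t. (1 + t^2*(v \<bullet> v))^2 * (quartic_obj C \<beta> ((1 / sqrt (1 + t^2*(v \<bullet> v))) *\<^sub>R (z + t *\<^sub>R v))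
         - quartic_obj C \<beta> z)
     = (v \<bullet> (C *v z) + 2*\<beta>*(\<Sum>k\<in>UNIV. (z$k)^3*(v$k))) * t
       + (1/2*(v \<bullet> (C *v v)) - 1/2*(v \<bullet> v)*(z \<bullet> (C *v z))
          + 3*\<beta>*(\<Sum>k\<in>UNIV. (z$k)^2*(v$k)^2) - (v \<bullet> v)*\<beta>*(\<Sum>k\<in>UNIV. (z$k)^4)) * t^2
       + c3 * t^3 + c4 * t^4"
proof -
  define m where "m = v \<bullet> v"
  define D where "D t = 1 + t^2*m" for t
  define a0 where "a0 = z \<bullet> (C *v z)"
  define a1 where "a1 = v \<bullet> (C *v z)"
  define a2 where "a2 = v \<bullet> (C *v v)"
  define b0 where "b0 = (\<Sum>k\<in>UNIV. (z$k)^4)"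
  define b1 where "b1 = (\<Sum>k\<in>UNIV. (z$k)^3*(v$k))"
  define b2 where "b2 = (\<Sum>k\<in>UNIV. (z$k)^2*(v$k)^2)"
  define b3 where "b3 = (\<Sum>k\<in>UNIV. (z$k)*(v$k)^3)"
  define b4 where "b4 = (\<Sum>k\<in>UNIV. (v$k)^4)"
  have D_pos: "0 < D t" for t
    by (simp add: D_def m_def add_pos_nonneg)
  have scaled: "D t^2 * quartic_obj C \<beta> ((1 / sqrt (D t)) *\<^sub>R (z + t *\<^sub>R v))
      = 1/2 * D t * (a0 + 2*t*a1 + t^2*a2) + \<beta>/2 * (b0 + 4*t*b1 + 6*t^2*b2 + 4*t^3*b3 + t^4*b4)" for t
    unfolding quartic_obj_normalized[OF D_pos] quadratic_form_add_scaled[OF sym] sum_pow4_add_scaled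
    by (simp add: a0_def a1_def a2_def b0_def b1_def b2_def b3_def b4_def)
  have "quartic_obj C \<beta> z = 1/2*a0 + \<beta>/2*b0"
    by (simp add: quartic_obj_def a0_def b0_def)
  then have "D t^2 * (quartic_obj C \<beta> ((1 / sqrt (D t)) *\<^sub>R (z + t *\<^sub>R v)) - quartic_obj C \<beta> z)
      = (a1 + 2*\<beta>*b1)*t + (1/2*a2 - 1/2*m*a0 + 3*\<beta>*b2 - m*\<beta>*b0)*t^2 + (m*a1 + 2*\<beta>*b3)*t^3
        + (1/2*m*a2 + \<beta>/2*b4 - m^2*(1/2*a0 + \<beta>/2*b0))*t^4" for t
    unfolding right_diff_distrib scaled
    by (simp add: D_def algebra_simps power2_eq_square power3_eq_cube power4_eq_xxxx)
  then show ?thesis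
    by (intro that) (simp add: D_def m_def a0_def a1_def a2_def b0_def b1_def b2_def)
qed

lemma local_minimizers_on_add_const:
  assumes "\<And>z. z \<in> S \<Longrightarrow> f z = h z + c"
  shows "local_minimizers_on f S = local_minimizers_on h S"
  unfolding local_minimizers_on_def using assms by auto

lemma quartic_obj_shift:
  assumes "norm z = 1"
  shows "quartic_obj A \<beta> z = quartic_obj (A - mat c) \<beta> z + c/2"
  using assms
  by (simp add: quartic_obj_def matrix_vector_mult_diff_rdistrib mat_matrix_vector_mult inner_diff_right
      dot_square_norm field_simps)

definition sign_orthant :: "'n set \<Rightarrow> (real^'n) set" where
  "sign_orthant T = {z. \<forall>k. (k \<in> T \<longrightarrow> 0 \<le> z$k) \<and> (k \<notin> T \<longrightarrow> z$k \<le> 0)}"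

lemma closed_sign_orthant: "closed (sign_orthant (T :: 'n::finite set))"
  unfolding sign_orthant_def
  by (intro closed_Collect_all closed_Collect_conj closed_Collect_imp open_Collect_const
      closed_Collect_le continuous_intros)

lemma local_minimizer_if_min_on_sign_orthant:
  fixes f :: "real^'n \<Rightarrow> real"
  assumes z: "z \<in> S \<inter> sign_orthant T" and nonzero: "\<And>k. z$k \<noteq> 0"
    and min: "\<And>w. w \<in> S \<inter> sign_orthant T \<Longrightarrow> f z \<le> f w"
  shows "z \<in> local_minimizers_on f S"
proof -
  define e where "e = Min (range (\<lambda>k. \<bar>z$k\<bar>))"
  have "e > 0"
    unfolding e_def using nonzero by (subst Min_gr_iff) auto
  moreover have "w \<in> sign_orthant T" if "dist w z < e" for w
  proof -
    have close: "\<bar>w$k - z$k\<bar> < \<bar>z$k\<bar>" for k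
    proof -
      have "\<bar>(w - z)$k\<bar> \<le> dist w z"
        using component_le_norm_cart[of "w - z" k] by (simp add: dist_norm)
      also have "\<dots> < e" by (fact that)
      also have "e \<le> \<bar>z$k\<bar>"
        unfolding e_def by (rule Min_le) auto
      finally show ?thesis by simp
    qed
    show ?thesis
      unfolding sign_orthant_def
    proof (intro CollectI allI conjI impI)
      fix k
      have "z$k \<noteq> 0" by (fact nonzero)
      moreover have "k \<in> T \<Longrightarrow> 0 \<le> z$k" "k \<notin> T \<Longrightarrow> z$k \<le> 0"
        using z by (simp_all add: sign_orthant_def)
      ultimately show "k \<in> T \<Longrightarrow> 0 \<le> w$k" "k \<notin> T \<Longrightarrow> w$k \<le> 0"
        using close[of k] by (simp_all add: abs_less_iff)
    qed
  qed
  ultimately show ?thesis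
    using z min unfolding local_minimizers_on_def by blast
qed

section \<open>Local minimisers for a dominant quartic term\<close>

text \<open>C stands for A shifted by the midpoint of its spectrum, so that r = rho/2 bounds its
  operator norm.\<close>
locale quartic_sphere =
  fixes C :: "real^'n^'n" and \<beta> r :: real
  assumes symmetric: "transpose C = C"
    and bilinear_bound: "\<And>x y. \<bar>x \<bullet> (C *v y)\<bar> \<le> r * norm x * norm y"
    and beta_pos: "0 < \<beta>"
begin

abbreviation g where "g \<equiv> quartic_obj C \<beta>"
abbreviation M where "M \<equiv> local_minimizers_on g (sphere 0 1)"

lemma r_nonneg: "0 \<le> r"
  using bilinear_bound[of "axis undefined 1" "axis undefined 1"] by (simp add: norm_axis_1)

lemma abs_quadratic_form_le: "\<bar>x \<bullet> (C *v x)\<bar> \<le> r * (x \<bullet> x)"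
  using bilinear_bound[of x x] by (simp add: dot_square_norm power2_eq_square mult.assoc)

lemma abs_quadratic_form_le_unit: "norm x = 1 \<Longrightarrow> \<bar>x \<bullet> (C *v x)\<bar> \<le> r"
  using abs_quadratic_form_le[of x] by (simp add: dot_square_norm)

lemma abs_matrix_vector_coord_le: "\<bar>(C *v z) $ k\<bar> \<le> r * norm z"
proof -
  have "(norm (C *v z))^2 \<le> r * norm (C *v z) * norm z"
    using bilinear_bound[of "C *v z" z] by (simp add: power2_norm_eq_inner)
  then have "norm (C *v z) \<le> r * norm z"
    by (cases "C *v z = 0") (use r_nonneg in \<open>auto simp: power2_eq_square\<close>)
  then show ?thesis
    using component_le_norm_cart[of "C *v z" k] by linarith
qed

lemma local_minimizer_norm: "z \<in> M \<Longrightarrow> norm z = 1"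
  by (simp add: local_minimizers_on_def)

lemma local_min_tangent_conditions:
  assumes z: "z \<in> M" and vz: "z \<bullet> v = 0"
  shows "v \<bullet> (C *v z) + 2*\<beta>*(\<Sum>k\<in>UNIV. (z$k)^3*(v$k)) = 0"
    and "0 \<le> 1/2*(v \<bullet> (C *v v)) - 1/2*(v \<bullet> v)*(z \<bullet> (C *v z))
              + 3*\<beta>*(\<Sum>k\<in>UNIV. (z$k)^2*(v$k)^2) - (v \<bullet> v)*\<beta>*(\<Sum>k\<in>UNIV. (z$k)^4)"
proof -
  from z obtain e where "e > 0" and emin: "\<And>w. w \<in> sphere 0 1 \<Longrightarrow> dist w z < e \<Longrightarrow> g z \<le> g w"
    unfolding local_minimizers_on_def by auto
  define D where "D t = 1 + t^2*(v \<bullet> v)" for t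
  define w where "w t = (1 / sqrt (D t)) *\<^sub>R (z + t *\<^sub>R v)" for t
  have D_pos: "0 < D t" for t
    by (simp add: D_def add_pos_nonneg)
  have "z \<bullet> z = 1"
    using local_minimizer_norm[OF z] by (simp add: dot_square_norm)
  then have "(z + t *\<^sub>R v) \<bullet> (z + t *\<^sub>R v) = D t" for t
    using vz by (simp add: D_def inner_add_left inner_add_right inner_commute power2_eq_square)
  then have w_sphere: "w t \<in> sphere 0 1" for t
    using D_pos[of t] by (simp add: w_def norm_eq_sqrt_inner)
  have "(w \<longlongrightarrow> (1 / sqrt (D 0)) *\<^sub>R (z + 0 *\<^sub>R v)) (at 0)"
    unfolding w_def D_def by (intro tendsto_intros) auto
  then have "(w \<longlongrightarrow> z) (at 0)"
    by (simp add: D_def)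
  from tendstoD[OF this \<open>e > 0\<close>] have "eventually (\<lambda>t. g z \<le> g (w t)) (at 0)"
    by (rule eventually_mono) (use emin w_sphere in auto)
  moreover obtain c3 c4 where expansion: "\<And>t. (D t)^2 * (g (w t) - g z)
     = (v \<bullet> (C *v z) + 2*\<beta>*(\<Sum>k\<in>UNIV. (z$k)^3*(v$k))) * t
       + (1/2*(v \<bullet> (C *v v)) - 1/2*(v \<bullet> v)*(z \<bullet> (C *v z))
          + 3*\<beta>*(\<Sum>k\<in>UNIV. (z$k)^2*(v$k)^2) - (v \<bullet> v)*\<beta>*(\<Sum>k\<in>UNIV. (z$k)^4)) * t^2
       + c3 * t^3 + c4 * t^4"
    unfolding D_def w_def using quartic_obj_great_circle_expansion[OF symmetric] by blast
  ultimately have "eventually (\<lambda>t. 0 \<le> (v \<bullet> (C *v z) + 2*\<beta>*(\<Sum>k\<in>UNIV. (z$k)^3*(v$k))) * t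
       + (1/2*(v \<bullet> (C *v v)) - 1/2*(v \<bullet> v)*(z \<bullet> (C *v z))
          + 3*\<beta>*(\<Sum>k\<in>UNIV. (z$k)^2*(v$k)^2) - (v \<bullet> v)*\<beta>*(\<Sum>k\<in>UNIV. (z$k)^4)) * t^2
       + c3 * t^3 + c4 * t^4) (at 0)"
    by (elim eventually_mono) (metis diff_ge_0_iff_ge zero_le_mult_iff zero_le_power2)
  from poly4_nonneg_near_0[OF this]
  show "v \<bullet> (C *v z) + 2*\<beta>*(\<Sum>k\<in>UNIV. (z$k)^3*(v$k)) = 0"
    and "0 \<le> 1/2*(v \<bullet> (C *v v)) - 1/2*(v \<bullet> v)*(z \<bullet> (C *v z))
              + 3*\<beta>*(\<Sum>k\<in>UNIV. (z$k)^2*(v$k)^2) - (v \<bullet> v)*\<beta>*(\<Sum>k\<in>UNIV. (z$k)^4)"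
    by simp_all
qed

text \<open>The Lagrange multiplier of the constraint z \<bullet> z = 1 for 2 g at a critical point z.\<close>
definition multiplier :: "real^'n \<Rightarrow> real" where
  "multiplier z = z \<bullet> (C *v z) + 2*\<beta>*(\<Sum>j\<in>UNIV. (z$j)^4)"

lemma local_min_gradient_eq:
  assumes z: "z \<in> M"
  shows "C *v z + (2*\<beta>) *\<^sub>R (\<chi> j. (z$j)^3) = multiplier z *\<^sub>R z"
proof -
  define G where "G = C *v z + (2*\<beta>) *\<^sub>R (\<chi> j. (z$j)^3)"
  have zz: "z \<bullet> z = 1"
    using local_minimizer_norm[OF z] by (simp add: dot_square_norm)
  have orth: "v \<bullet> G = 0" if "z \<bullet> v = 0" for v
  proof -
    have "v \<bullet> (\<chi> j. (z$j)^3) = (\<Sum>k\<in>UNIV. (z$k)^3*(v$k))"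
      by (simp add: inner_vec_def mult.commute)
    then show ?thesis
      using local_min_tangent_conditions(1)[OF z that] by (simp add: G_def inner_add_right)
  qed
  define w where "w = G - (z \<bullet> G) *\<^sub>R z"
  have "z \<bullet> w = 0"
    using zz by (simp add: w_def inner_diff_right)
  then have "w \<bullet> w = 0"
    using orth[of w] by (simp add: w_def inner_diff_left inner_commute)
  then have "G = (z \<bullet> G) *\<^sub>R z"
    by (simp add: w_def)
  moreover have "z \<bullet> (\<chi> j. (z$j)^3) = (\<Sum>j\<in>UNIV. (z$j)^4)"
    by (simp add: inner_vec_def power3_eq_cube power4_eq_xxxx mult.assoc)
  then have "z \<bullet> G = multiplier z"
    by (simp add: G_def multiplier_def inner_add_right)
  ultimately show ?thesis
    by (simp add: G_def)
qed

lemma local_min_stationary: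
  assumes "z \<in> M"
  shows "(C *v z)$k + 2*\<beta>*(z$k)^3 = multiplier z * z$k"
  using arg_cong[OF local_min_gradient_eq[OF assms], of "\<lambda>v. v $ k"] by simp

lemma local_min_stationary_inner:
  assumes "z \<in> M"
  shows "d \<bullet> (C *v z) + 2*\<beta>*(\<Sum>k\<in>UNIV. d$k * (z$k)^3) = multiplier z * (d \<bullet> z)"
  using arg_cong[OF local_min_gradient_eq[OF assms], of "\<lambda>v. d \<bullet> v"]
  by (simp add: inner_add_right inner_vec_def sum_distrib_left mult.left_commute distrib_left
      sum.distrib)

text \<open>Second-order condition in the tangent direction e_k, using \<Sum>_j z_j^4 \<ge> 1/(N-1).\<close>
lemma local_min_coord_nonzero:
  assumes z: "z \<in> M" and small: "(real CARD('n) - 1) * r < \<beta>"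
  shows "z$k \<noteq> 0"
proof
  assume zk: "z$k = 0"
  have n: "norm z = 1"
    using local_minimizer_norm[OF z] .
  define v where "v = axis k (1::real)"
  have "z \<bullet> v = 0" using zk by (simp add: v_def inner_axis inner_commute)
  have "v \<bullet> v = 1" by (simp add: v_def inner_axis_axis)
  moreover have "(\<Sum>j\<in>UNIV. (z$j)^2*(v$j)^2) = 0"
    by (rule sum.neutral) (auto simp: v_def axis_def zk)
  ultimately have "0 \<le> 1/2*(v \<bullet> (C *v v)) - 1/2*(z \<bullet> (C *v z)) - \<beta>*(\<Sum>k\<in>UNIV. (z$k)^4)"
    using local_min_tangent_conditions(2)[OF z \<open>z \<bullet> v = 0\<close>] by simp
  moreover have "\<bar>v \<bullet> (C *v v)\<bar> \<le> r" and "\<bar>z \<bullet> (C *v z)\<bar> \<le> r"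
    using abs_quadratic_form_le[of v] abs_quadratic_form_le_unit[OF n] \<open>v \<bullet> v = 1\<close> by auto
  ultimately have "\<beta>*(\<Sum>k\<in>UNIV. (z$k)^4) \<le> r"
    by linarith
  have "1 \<le> (real CARD('n) - 1) * (\<Sum>k\<in>UNIV. (z$k)^4)"
    using sum_coord_pow4_ge_support[OF n, of "UNIV - {k}"] zk
    by (auto simp: card_Diff_singleton of_nat_diff)
  then have "\<beta> \<le> (real CARD('n) - 1) * (\<beta>*(\<Sum>k\<in>UNIV. (z$k)^4))"
    using beta_pos by (simp add: mult.left_commute)
  also have "\<dots> \<le> (real CARD('n) - 1) * r"
    using \<open>\<beta>*(\<Sum>k\<in>UNIV. (z$k)^4) \<le> r\<close> by (intro mult_left_mono) auto
  finally show False
    using small by simp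
qed

text \<open>Second-order condition in the tangent direction e_k - z_k z.\<close>
lemma local_min_coord_sq_lower:
  assumes z: "z \<in> M" and small: "2 * r * real CARD('n) \<le> \<beta>"
  shows "1 \<le> (12 * real CARD('n) + 1) * (z$k)^2"
proof -
  define N where "N = real CARD('n)"
  have n: "norm z = 1"
    using local_minimizer_norm[OF z] .
  have zz: "z \<bullet> z = 1"
    using n by (simp add: dot_square_norm)
  define v where "v = axis k (1::real) - (z$k) *\<^sub>R z"
  define x where "x = (z$k)^2"
  define P where "P = (\<Sum>k\<in>UNIV. (z$k)^4)"
  define m where "m = v \<bullet> v"
  have vz: "z \<bullet> v = 0" and mx: "m = 1 - x"
    and "(\<Sum>j\<in>UNIV. (z$j)^2*(v$j)^2) = x - 2*x^2 + x*P"
    using tangent_projection_of_axis[OF zz, of k] by (simp_all add: v_def m_def x_def P_def)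
  then have second:
    "0 \<le> 1/2*(v \<bullet> (C *v v)) - 1/2*m*(z \<bullet> (C *v z)) + 3*\<beta>*(x - 2*x^2 + x*P) - m*\<beta>*P"
    using local_min_tangent_conditions(2)[OF z vz] by (simp add: m_def P_def)
  have x_bounds: "0 \<le> x" "x \<le> 1"
    using coord_sq_le_1[OF n] by (auto simp: x_def)
  then have "0 \<le> m" using mx by simp
  have "v \<bullet> (C *v v) \<le> r * m"
    using abs_quadratic_form_le[of v] by (simp add: m_def)
  moreover have "- (m * (z \<bullet> (C *v z))) \<le> m * r"
    using abs_quadratic_form_le_unit[OF n] \<open>0 \<le> m\<close>
    by (metis abs_le_D2 minus_mult_right mult_left_mono)
  moreover have "3*\<beta>*(x - 2*x^2 + x*P) \<le> 6*\<beta>*x"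
  proof -
    have "x*P \<le> x"
      using mult_left_mono[OF sum_coord_pow4_le_1[OF n] \<open>0 \<le> x\<close>] by (simp add: P_def)
    moreover have "0 \<le> x^2" by simp
    ultimately have "x - 2*x^2 + x*P \<le> 2*x" by linarith
    then show ?thesis
      using mult_left_mono[of _ _ "3*\<beta>"] beta_pos by fastforce
  qed
  moreover have "m*\<beta>/N \<le> m*\<beta>*P"
    using mult_left_mono[OF sum_coord_pow4_ge_support[OF n, of UNIV] \<open>0 \<le> m\<close>] beta_pos
    by (simp add: P_def N_def field_simps)
  ultimately have "m*\<beta>/N \<le> r*m + 6*\<beta>*x"
    using second beta_pos by (simp add: algebra_simps)
  moreover have "r * m \<le> m * \<beta> / (2 * N)"
    using mult_left_mono[OF small \<open>0 \<le> m\<close>] by (simp add: N_def field_simps)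
  ultimately have "m * \<beta> \<le> 12 * N * \<beta> * x"
    by (simp add: N_def field_simps)
  then have "m \<le> 12 * N * x"
    using beta_pos by (simp add: mult.commute mult.left_commute)
  then show ?thesis
    using mx by (simp add: x_def N_def algebra_simps)
qed

lemma local_min_multiplier_near:
  assumes z: "z \<in> M" and small: "2 * r * real CARD('n) \<le> \<beta>"
  shows "\<bar>multiplier z - 2*\<beta>*(z$j)^2\<bar> \<le> r * (12 * real CARD('n) + 1)"
proof -
  define K where "K = 12 * real CARD('n) + 1"
  have n: "norm z = 1"
    using local_minimizer_norm[OF z] .
  have "\<bar>z$j\<bar> \<le> 1"
    using coord_sq_le_1[OF n] by (simp add: abs_square_le_1)
  then have "(z$j)^2 \<le> \<bar>z$j\<bar>"
    by (metis abs_ge_zero mult_left_le power2_eq_square power2_abs)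
  then have "K * (z$j)^2 \<le> K * \<bar>z$j\<bar>"
    by (simp add: K_def)
  then have "1 \<le> K * \<bar>z$j\<bar>"
    using local_min_coord_sq_lower[OF z small, of j] unfolding K_def by linarith
  define dev where "dev = \<bar>multiplier z - 2*\<beta>*(z$j)^2\<bar>"
  have "\<bar>z$j\<bar> * dev = \<bar>(C *v z)$j\<bar>"
    using local_min_stationary[OF z, of j]
    by (simp flip: abs_mult add: dev_def algebra_simps power2_eq_square power3_eq_cube)
  also have "\<dots> \<le> r"
    using abs_matrix_vector_coord_le[of z j] n by simp
  finally have "K * (\<bar>z$j\<bar> * dev) \<le> K * r"
    by (rule mult_left_mono) (simp add: K_def)
  moreover have "dev \<le> K * (\<bar>z$j\<bar> * dev)"
    using mult_right_mono[OF \<open>1 \<le> K * \<bar>z$j\<bar>\<close>, of dev] by (simp add: dev_def mult.assoc)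
  ultimately have "dev \<le> K * r"
    by linarith
  then show ?thesis
    by (simp add: dev_def K_def mult.commute)
qed

text \<open>Sum the estimates of local_min_multiplier_near over j, using \<Sum>_j z_j^2 = 1.\<close>
lemma local_min_multiplier_coord_bounds:
  assumes z: "z \<in> M" and small: "2 * r * real CARD('n) \<le> \<beta>"
  shows "multiplier z \<le> 2*\<beta>/real CARD('n) + r*(12*real CARD('n)+1)"
    and "1/real CARD('n) - r*(12*real CARD('n)+1)/\<beta> \<le> (z$k)^2"
proof -
  define N where "N = real CARD('n)"
  define E where "E = r*(12*N+1)"
  have N_pos: "N > 0" by (simp add: N_def)
  have near: "\<bar>multiplier z - 2*\<beta>*(z$j)^2\<bar> \<le> E" for j
    using local_min_multiplier_near[OF z small] by (simp add: E_def N_def)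
  have "(\<Sum>j\<in>UNIV. multiplier z - 2*\<beta>*(z$j)^2) = N * multiplier z - 2*\<beta>"
    using local_minimizer_norm[OF z]
    by (simp add: sum_subtractf sum_coord_sq_eq_norm_sq N_def flip: sum_distrib_left)
  moreover have "\<bar>\<Sum>j\<in>UNIV. multiplier z - 2*\<beta>*(z$j)^2\<bar> \<le> (\<Sum>j\<in>(UNIV::'n set). E)"
    using sum_abs[of "\<lambda>j. multiplier z - 2*\<beta>*(z$j)^2" UNIV] sum_mono[of UNIV, OF near]
    by (rule order_trans)
  then have "\<bar>\<Sum>j\<in>UNIV. multiplier z - 2*\<beta>*(z$j)^2\<bar> \<le> N * E"
    by (simp add: N_def)
  ultimately have "\<bar>multiplier z - 2*\<beta>/N\<bar> \<le> E"
    using N_pos by (simp add: field_simps abs_le_iff)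
  then show "multiplier z \<le> 2*\<beta>/real CARD('n) + r*(12*real CARD('n)+1)"
    by (simp add: E_def N_def)
  have "2*\<beta>/N - 2*E \<le> 2*\<beta>*(z$k)^2"
    using \<open>\<bar>multiplier z - 2*\<beta>/N\<bar> \<le> E\<close> near[of k] by linarith
  then show "1/real CARD('n) - r*(12*real CARD('n)+1)/\<beta> \<le> (z$k)^2"
    using beta_pos by (simp add: E_def N_def field_simps)
qed

lemma strong_threshold_implies_weak:
  assumes small: "r * real CARD('n) * (21 * real CARD('n) + 2) < \<beta>"
  shows "2 * r * real CARD('n) \<le> \<beta>" and "(real CARD('n) - 1) * r < \<beta>"
    and "2 * r * (real CARD('n) * (real CARD('n) - 1)) < \<beta>"
proof -
  define N where "N = real CARD('n)"
  have "1 \<le> N" by (simp add: N_def)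
  then have "r * (2 * N) \<le> r * (N * (21 * N + 2))" and "r * (N - 1) \<le> r * (N * (21 * N + 2))"
    and "r * (2 * (N * (N - 1))) \<le> r * (N * (21 * N + 2))"
    using r_nonneg by (intro mult_left_mono; simp add: algebra_simps)+
  then show "2 * r * real CARD('n) \<le> \<beta>" and "(real CARD('n) - 1) * r < \<beta>"
    and "2 * r * (real CARD('n) * (real CARD('n) - 1)) < \<beta>"
    using small by (simp_all add: N_def mult_ac)
qed

lemma local_min_same_signs_coord_prod_ge:
  assumes z: "z \<in> M" and y: "y \<in> M" and signs: "0 < z$k \<longleftrightarrow> 0 < y$k"
    and small1: "2 * r * real CARD('n) \<le> \<beta>" and small2: "(real CARD('n) - 1) * r < \<beta>"
  shows "1/real CARD('n) - r*(12*real CARD('n)+1)/\<beta> \<le> z$k * y$k"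
proof -
  define L where "L = 1/real CARD('n) - r*(12*real CARD('n)+1)/\<beta>"
  have "z$k \<noteq> 0" "y$k \<noteq> 0"
    using local_min_coord_nonzero[OF z small2] local_min_coord_nonzero[OF y small2] by auto
  then have "0 < z$k * y$k"
    using signs by (cases "0 < z$k") (auto simp: zero_less_mult_iff)
  moreover have "L^2 \<le> (z$k * y$k)^2" if "0 < L"
    using mult_mono[OF local_min_multiplier_coord_bounds(2)[OF z small1]
        local_min_multiplier_coord_bounds(2)[OF y small1]] that
    by (simp add: L_def power2_eq_square algebra_simps)
  ultimately show ?thesis
    unfolding L_def[symmetric] by (cases "0 < L") (auto intro: power2_le_imp_le)
qed

lemma local_min_pair_identity:
  assumes z: "z \<in> M" and y: "y \<in> M"
  defines "d \<equiv> z - y"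
  shows "d \<bullet> (C *v d) + 2*\<beta>*(\<Sum>k\<in>UNIV. d$k * ((z$k)^3 - (y$k)^3))
      = (multiplier z + multiplier y) * ((d \<bullet> d) / 2)"
proof -
  have "C *v d = C *v z - C *v y"
    by (simp add: d_def matrix_vector_mult_diff_distrib)
  then have "d \<bullet> (C *v d) + 2*\<beta>*(\<Sum>k\<in>UNIV. d$k * ((z$k)^3 - (y$k)^3))
      = (d \<bullet> (C *v z) + 2*\<beta>*(\<Sum>k\<in>UNIV. d$k * (z$k)^3))
        - (d \<bullet> (C *v y) + 2*\<beta>*(\<Sum>k\<in>UNIV. d$k * (y$k)^3))"
    by (simp add: inner_diff_right right_diff_distrib sum_subtractf)
  also have "\<dots> = multiplier z * (d \<bullet> z) - multiplier y * (d \<bullet> y)"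
    using local_min_stationary_inner[OF z, of d] local_min_stationary_inner[OF y, of d] by simp
  also have "\<dots> = (multiplier z + multiplier y) * ((d \<bullet> d) / 2)"
  proof -
    have "z \<bullet> z = 1" "y \<bullet> y = 1"
      using local_minimizer_norm[OF z] local_minimizer_norm[OF y] by (simp_all add: dot_square_norm)
    then have "d \<bullet> z = 1 - z \<bullet> y" "d \<bullet> y = z \<bullet> y - 1" "d \<bullet> d = 2 - 2 * (z \<bullet> y)"
      by (simp_all add: d_def inner_diff_left inner_diff_right inner_commute)
    then show ?thesis
      by (simp only:) (simp add: algebra_simps)
  qed
  finally show ?thesis .
qed

text \<open>In local_min_pair_identity, all coordinates being bounded away from 0 makes the cubic term
  coercive, and it beats both the quadratic form and the multipliers.\<close>
lemma local_min_eq_if_same_signs: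
  assumes z: "z \<in> M" and y: "y \<in> M" and signs: "\<And>k. 0 < z$k \<longleftrightarrow> 0 < y$k"
    and small: "r * real CARD('n) * (21 * real CARD('n) + 2) < \<beta>"
  shows "z = y"
proof -
  define N where "N = real CARD('n)"
  define E where "E = r*(12*N+1)"
  define L where "L = 1/N - E/\<beta>"
  define d where "d = z - y"
  note small1 = strong_threshold_implies_weak(1)[OF small]
  note small2 = strong_threshold_implies_weak(2)[OF small]
  have cubes: "3 * L * (d$k)^2 \<le> d$k * ((z$k)^3 - (y$k)^3)" for k
  proof -
    have "L \<le> (z$k)^2" "L \<le> (y$k)^2" "L \<le> z$k * y$k"
      using local_min_multiplier_coord_bounds(2)[OF _ small1] z y
        local_min_same_signs_coord_prod_ge[OF z y signs small1 small2]
      by (simp_all add: L_def E_def N_def)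
    from diff_mult_diff_cubes_ge[OF this] show ?thesis
      by (simp add: d_def)
  qed
  have "3 * L * (d \<bullet> d) = (\<Sum>k\<in>UNIV. 3 * L * (d$k)^2)"
    by (simp add: inner_vec_def sum_distrib_left power2_eq_square)
  also have "\<dots> \<le> (\<Sum>k\<in>UNIV. d$k * ((z$k)^3 - (y$k)^3))"
    by (intro sum_mono cubes)
  finally have "6*\<beta>*L*(d \<bullet> d) \<le> 2*\<beta>*(\<Sum>k\<in>UNIV. d$k * ((z$k)^3 - (y$k)^3))"
    using beta_pos by simp
  moreover have "- r * (d \<bullet> d) \<le> d \<bullet> (C *v d)"
    using abs_quadratic_form_le[of d] by simp
  moreover have mu: "multiplier z + multiplier y \<le> 2 * (2*\<beta>/N + E)"
    using local_min_multiplier_coord_bounds(1)[OF z small1] local_min_multiplier_coord_bounds(1)[OF y small1]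
    by (simp add: E_def N_def)
  then have "(multiplier z + multiplier y) * ((d \<bullet> d) / 2) \<le> (2*\<beta>/N + E) * (d \<bullet> d)"
    using mult_right_mono[OF mu, of "(d \<bullet> d) / 2"] by (simp add: algebra_simps)
  ultimately have "- r * (d \<bullet> d) + 6*\<beta>*L*(d \<bullet> d) \<le> (2*\<beta>/N + E) * (d \<bullet> d)"
    using local_min_pair_identity[OF z y] unfolding d_def by linarith
  moreover have "6*\<beta>*L*(d \<bullet> d) = (6*\<beta>/N - 6*E) * (d \<bullet> d)"
    using beta_pos by (simp add: L_def field_simps)
  moreover have "(4*\<beta>/N - 7*E - r) * (d \<bullet> d)
      = (- r * (d \<bullet> d) + (6*\<beta>/N - 6*E) * (d \<bullet> d)) - (2*\<beta>/N + E) * (d \<bullet> d)"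
    by (simp add: algebra_simps)
  ultimately have "(4*\<beta>/N - 7*E - r) * (d \<bullet> d) \<le> 0"
    by linarith
  moreover have "7*E + r < 4*\<beta>/N"
    using small by (simp add: E_def N_def field_simps)
  ultimately have "d \<bullet> d \<le> 0"
    by (simp add: mult_le_0_iff)
  then have "d \<bullet> d = 0"
    using inner_ge_zero[of d] by linarith
  then show ?thesis
    by (simp add: d_def)
qed

lemma balanced_point_in_sign_orthant:
  obtains u where "u \<in> sphere 0 1 \<inter> sign_orthant T" and "g u \<le> r/2 + \<beta>/(2 * real CARD('n))"
proof -
  define N where "N = real CARD('n)"
  define u where "u = (\<chi> k. (if k \<in> T then 1 else -1) / sqrt N)"
  have N_pos: "N > 0" by (simp add: N_def)
  have u_sq: "(u$k)^2 = 1/N" for k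
    using N_pos by (simp add: u_def power_divide)
  then have "(norm u)^2 = 1"
    using N_pos by (simp add: N_def flip: sum_coord_sq_eq_norm_sq)
  then have "norm u = 1"
    using norm_ge_zero[of u] by (auto simp: power2_eq_1_iff)
  moreover have "(u$k)^4 = ((u$k)^2)^2" for k
    by (simp flip: power_mult)
  then have "(u$k)^4 = 1/N^2" for k
    by (simp add: u_sq power_divide)
  then have "(\<Sum>k\<in>UNIV. (u$k)^4) = 1/N"
    using N_pos by (simp add: N_def power2_eq_square)
  ultimately show ?thesis
    using that[of u] abs_quadratic_form_le_unit[OF \<open>norm u = 1\<close>] N_pos
    by (auto simp: quartic_obj_def sign_orthant_def u_def N_def)
qed

text \<open>The energy bound is that of balanced_point_in_sign_orthant.\<close>
lemma coord_nonzero_if_low_energy: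
  assumes small: "2 * r * (real CARD('n) * (real CARD('n) - 1)) < \<beta>"
    and n: "norm z = 1" and low: "g z \<le> r/2 + \<beta>/(2 * real CARD('n))"
  shows "z$k \<noteq> 0"
proof
  assume zk: "z$k = 0"
  define N where "N = real CARD('n)"
  define P where "P = (\<Sum>k\<in>UNIV. (z$k)^4)"
  have "1 \<le> (N - 1) * P"
    using sum_coord_pow4_ge_support[OF n, of "UNIV - {k}"] zk
    by (auto simp: N_def P_def card_Diff_singleton of_nat_diff)
  then have "N * 1 - (N - 1) \<le> N * ((N - 1) * P) - (N - 1)"
    by (simp add: N_def)
  also have "\<dots> = N * (N - 1) * (P - 1/N)"
    by (simp add: N_def field_simps)
  finally have "1 \<le> N * (N - 1) * (P - 1/N)"
    by simp
  have "- r/2 + \<beta>/2 * P \<le> g z"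
    using abs_quadratic_form_le_unit[OF n] by (simp add: quartic_obj_def P_def)
  with low have "\<beta> * (P - 1/N) \<le> 2 * r"
    by (simp add: N_def algebra_simps)
  then have "\<beta> * (P - 1/N) * (N * (N - 1)) \<le> 2 * r * (N * (N - 1))"
    by (rule mult_right_mono) (simp add: N_def)
  moreover have "\<beta> \<le> \<beta> * (N * (N - 1) * (P - 1/N))"
    using \<open>1 \<le> N * (N - 1) * (P - 1/N)\<close> beta_pos by simp
  moreover have "\<beta> * (P - 1/N) * (N * (N - 1)) = \<beta> * (N * (N - 1) * (P - 1/N))"
    by (simp only: mult_ac)
  moreover from small have "2 * r * (N * (N - 1)) < \<beta>"
    unfolding N_def .
  ultimately show False
    by linarith
qed

lemma local_min_exists_with_signs:
  assumes small: "2 * r * (real CARD('n) * (real CARD('n) - 1)) < \<beta>"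
  shows "\<exists>z\<in>M. {k. 0 < z$k} = T"
proof -
  define K where "K = sphere (0::real^'n) 1 \<inter> sign_orthant T"
  obtain u where "u \<in> K" and "g u \<le> r/2 + \<beta>/(2 * real CARD('n))"
    unfolding K_def by (rule balanced_point_in_sign_orthant)
  moreover have "compact K"
    unfolding K_def by (rule compact_Int_closed[OF compact_sphere closed_sign_orthant])
  moreover have "continuous_on K g"
    unfolding quartic_obj_def by (intro continuous_intros)
  ultimately obtain z where "z \<in> K" and min: "\<And>w. w \<in> K \<Longrightarrow> g z \<le> g w"
    using continuous_attains_inf[of K g] \<open>u \<in> K\<close> by blast
  have nonzero: "z$k \<noteq> 0" for k
  proof (rule coord_nonzero_if_low_energy[OF small])
    show "norm z = 1"
      using \<open>z \<in> K\<close> by (simp add: K_def)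
    show "g z \<le> r/2 + \<beta>/(2 * real CARD('n))"
      using min[OF \<open>u \<in> K\<close>] \<open>g u \<le> r/2 + \<beta>/(2 * real CARD('n))\<close> by simp
  qed
  then have "z \<in> M"
    using local_minimizer_if_min_on_sign_orthant[of z "sphere 0 1" T g] \<open>z \<in> K\<close> min
    by (simp add: K_def)
  moreover have "0 < z$k \<longleftrightarrow> k \<in> T" for k
  proof -
    have "k \<in> T \<Longrightarrow> 0 \<le> z$k" "k \<notin> T \<Longrightarrow> z$k \<le> 0"
      using \<open>z \<in> K\<close> by (simp_all add: K_def sign_orthant_def)
    then show ?thesis
      using nonzero[of k] by (cases "k \<in> T") auto
  qed
  then have "{k. 0 < z$k} = T"
    by auto
  ultimately show ?thesis
    by blast
qed

lemma sign_patterns_of_local_minimizers: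
  assumes small: "2 * r * (real CARD('n) * (real CARD('n) - 1)) < \<beta>"
  shows "(\<lambda>z. {k. 0 < z$k}) ` M = UNIV"
proof -
  have "T \<in> (\<lambda>z. {k. 0 < z$k}) ` M" for T
  proof -
    obtain z where "z \<in> M" "{k. 0 < z$k} = T"
      using local_min_exists_with_signs[OF small] by blast
    then show ?thesis by blast
  qed
  then show ?thesis by blast
qed

lemma card_local_minimizers_ge:
  assumes small: "2 * r * (real CARD('n) * (real CARD('n) - 1)) < \<beta>"
  shows "infinite M \<or> 2 ^ CARD('n) \<le> card M"
proof (cases "finite M")
  case True
  then have "card ((\<lambda>z. {k. 0 < z$k}) ` M) \<le> card M"
    by (simp add: card_image_le)
  then show ?thesis
    by (simp add: sign_patterns_of_local_minimizers[OF small] card_UNIV_set)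
qed simp

lemma card_local_minimizers_eq:
  assumes small: "r * real CARD('n) * (21 * real CARD('n) + 2) < \<beta>"
  shows "finite M" and "card M = 2 ^ CARD('n)"
proof -
  note small' = strong_threshold_implies_weak(3)[OF small]
  have "inj_on (\<lambda>z. {k. 0 < z$k}) M"
  proof (rule inj_onI)
    fix z y assume "z \<in> M" "y \<in> M" "{k. 0 < z$k} = {k. 0 < y$k}"
    then show "z = y"
      using local_min_eq_if_same_signs[OF _ _ _ small] by (simp add: set_eq_iff)
  qed
  then have "bij_betw (\<lambda>z. {k. 0 < z$k}) M UNIV"
    by (simp add: bij_betw_def sign_patterns_of_local_minimizers[OF small'])
  then show "finite M" and "card M = 2 ^ CARD('n)"
    by (simp_all add: bij_betw_finite bij_betw_same_card card_UNIV_set)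
qed

end

lemma quartic_sphere_spectral_shift:
  fixes A :: "real^'n^'n"
  assumes sym: "transpose A = A" and "0 < \<beta>"
  shows "quartic_sphere (A - mat ((lambda_max A + lambda_min A)/2)) \<beta> ((lambda_max A - lambda_min A)/2)"
proof
  define c where "c = (lambda_max A + lambda_min A)/2"
  show "transpose (A - mat c) = A - mat c"
    using sym by (simp add: vec_eq_iff transpose_def mat_def)
  have "\<bar>x \<bullet> ((A - mat c) *v x)\<bar> \<le> (lambda_max A - lambda_min A)/2" if "norm x = 1" for x
    using quadratic_form_le_lambda_max[OF sym that] quadratic_form_ge_lambda_min[OF sym that] that
    by (simp add: c_def matrix_vector_mult_diff_rdistrib mat_matrix_vector_mult inner_diff_right
        dot_square_norm abs_le_iff field_simps)
  then show "\<bar>x \<bullet> ((A - mat c) *v y)\<bar> \<le> (lambda_max A - lambda_min A)/2 * norm x * norm y" for x y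
    by (rule bilinear_bound_of_quadratic_bound[OF \<open>transpose (A - mat c) = A - mat c\<close>])
qed (fact \<open>0 < \<beta>\<close>)

lemma threshold_comparisons:
  fixes N r :: real
  assumes "2 \<le> N" and "0 \<le> r"
  shows "2 * r * (N * (N - 1)) \<le> 2 * r * N^2"
    and "r * N * (21 * N + 2) \<le> 18 * N^3 / (N - 1) * (2 * r)"
proof -
  show "2 * r * (N * (N - 1)) \<le> 2 * r * N^2"
    using assms by (intro mult_left_mono) (auto simp: power2_eq_square algebra_simps)
  have "N * (21 * N + 2) * (N - 1) \<le> 36 * N^3"
    using assms(1) by (simp add: power3_eq_cube algebra_simps)
  then have "N * (21 * N + 2) \<le> 36 * N^3 / (N - 1)"
    using assms(1) by (simp add: le_divide_eq)
  then have "r * (N * (21 * N + 2)) \<le> r * (36 * N^3 / (N - 1))"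
    using assms(2) by (rule mult_left_mono)
  then show "r * N * (21 * N + 2) \<le> 18 * N^3 / (N - 1) * (2 * r)"
    by (simp add: mult_ac)
qed

theorem corollary1:
  fixes A :: "real^'n^'n" and \<beta> :: real
  assumes "CARD('n) \<ge> 2"
    and "transpose A = A"
    and "\<beta> > 0"
  shows "(\<beta> > (lambda_max A - lambda_min A) * real (CARD('n))^2 \<longrightarrow>
           infinite (local_minimizers_on (quartic_obj A \<beta>) (sphere 0 1))
           \<or> card (local_minimizers_on (quartic_obj A \<beta>) (sphere 0 1)) \<ge> 2 ^ CARD('n))
       \<and> (\<beta> > 18 * real (CARD('n))^3 / (real (CARD('n)) - 1) * (lambda_max A - lambda_min A) \<longrightarrow>
           finite (local_minimizers_on (quartic_obj A \<beta>) (sphere 0 1))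
           \<and> card (local_minimizers_on (quartic_obj A \<beta>) (sphere 0 1)) = 2 ^ CARD('n))"
proof -
  define N where "N = real CARD('n)"
  define c where "c = (lambda_max A + lambda_min A)/2"
  define r where "r = (lambda_max A - lambda_min A)/2"
  interpret quartic_sphere "A - mat c" \<beta> r
    unfolding c_def r_def using quartic_sphere_spectral_shift[OF assms(2,3)] .
  have minimizers: "local_minimizers_on (quartic_obj A \<beta>) (sphere 0 1) = M"
    using quartic_obj_shift by (intro local_minimizers_on_add_const) simp
  have rho: "lambda_max A - lambda_min A = 2 * r"
    by (simp add: r_def)
  have "2 \<le> N" using assms(1) by (simp add: N_def)
  note thresholds = threshold_comparisons[OF this r_nonneg]
  show ?thesis
    unfolding minimizers rho
    using card_local_minimizers_ge card_local_minimizers_eq thresholds by (auto simp: N_def)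
qed

end
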